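(* Let $(A,B)$ be controllable. For any $N$, any $Q_t\in\mathcal Q$, $R_t\in\mathcal R$ ($0\le t\le N-1$) and $Q_N\in\mathcal P$, the matrices defined by $P_N=Q_N$ and, for $t=N-1,\dots,0$, $P_t=Q_t+A^\top\big(P_{t+1}-P_{t+1}B(R_t+B^\top P_{t+1}B)^{-1}B^\top P_{t+1}\big)A$ satisfy $P_t\in\mathcal P$ for all $0\le t\le N$.
   Context: Fix $\mu_f,\mu_g>0$, $0<l_f,l_g<\infty$. $P^e(Q,R)$ denotes the positive definite solution of the DARE $P=Q+A^\top(P-PB(B^\top PB+R)^{-1}B^\top P)A$. $\mathcal Q=\{Q:\mu_fI_n\le Q\le l_fI_n\}$, $\mathcal R=\{R:\mu_gI_m\le R\le l_gI_m\}$, $\bar P=P^e(l_fI_n,l_gI_m)$, $\underline P=P^e(\mu_fI_n,\mu_gI_m)$, $\mathcal P=\{P:\underline P\le P\le\bar P\}$ (Loewner order). *)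

theory Defs
  imports "HOL-Analysis.Analysis"
begin

(* Matrix power A^k (the componentwise '^' on vec is not matrix power) *)
primrec matpow :: "real^'n^'n \<Rightarrow> nat \<Rightarrow> real^'n^'n" where
  "matpow A 0 = mat 1"
| "matpow A (Suc k) = A ** matpow A k"

(* Kalman controllability: the controllability matrix [B, AB, ..., A^(n-1) B]
   has rank n, i.e. its columns span R^n *)
definition controllable :: "real^'n^'n \<Rightarrow> real^'m^'n \<Rightarrow> bool" where
  "controllable A B \<longleftrightarrow>
     span (\<Union>k\<in>{..<CARD('n)}. columns (matpow A k ** B)) = UNIV"

definition psd :: "real^'n^'n \<Rightarrow> bool" where
  "psd M \<longleftrightarrow> transpose M = M \<and> (\<forall>x. 0 \<le> x \<bullet> (M *v x))"

definition pos_def :: "real^'n^'n \<Rightarrow> bool" where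
  "pos_def M \<longleftrightarrow> transpose M = M \<and> (\<forall>x. x \<noteq> 0 \<longrightarrow> 0 < x \<bullet> (M *v x))"

definition loewner_le :: "real^'n^'n \<Rightarrow> real^'n^'n \<Rightarrow> bool" where
  "loewner_le X Y \<longleftrightarrow> psd (Y - X)"

definition riccati :: "real^'n^'n \<Rightarrow> real^'m^'n \<Rightarrow> real^'n^'n \<Rightarrow> real^'m^'m
    \<Rightarrow> real^'n^'n \<Rightarrow> real^'n^'n" where
  "riccati A B Q R P = Q + transpose A **
     (P - P ** B ** matrix_inv (transpose B ** P ** B + R) ** transpose B ** P) ** A"

definition dare_sol :: "real^'n^'n \<Rightarrow> real^'m^'n \<Rightarrow> real^'n^'n \<Rightarrow> real^'m^'m
    \<Rightarrow> real^'n^'n" where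
  "dare_sol A B Q R = (THE P. pos_def P \<and> P = riccati A B Q R P)"

definition Qset :: "real \<Rightarrow> real \<Rightarrow> (real^'n^'n) set" where
  "Qset muf lf = {Q. loewner_le (muf *\<^sub>R mat 1) Q \<and> loewner_le Q (lf *\<^sub>R mat 1)}"

definition Rset :: "real \<Rightarrow> real \<Rightarrow> (real^'m^'m) set" where
  "Rset mug lg = {R. loewner_le (mug *\<^sub>R mat 1) R \<and> loewner_le R (lg *\<^sub>R mat 1)}"

definition Pset :: "real^'n^'n \<Rightarrow> real^'m^'n \<Rightarrow> real \<Rightarrow> real \<Rightarrow> real \<Rightarrow> real
    \<Rightarrow> (real^'n^'n) set" where
  "Pset A B muf lf mug lg =
     {P. loewner_le (dare_sol A B (muf *\<^sub>R mat 1) (mug *\<^sub>R mat 1)) P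
       \<and> loewner_le P (dare_sol A B (lf *\<^sub>R mat 1) (lg *\<^sub>R mat 1))}"

end

theory Submission
  imports Defs
begin

text \<open>
  Completing the square in the control shows that \<open>x\<^sup>T Ric(Q,R,P) x\<close> is the minimum over \<open>u\<close>
  of the one-step cost \<open>x\<^sup>T Q x + u\<^sup>T R u + (Ax + Bu)\<^sup>T P (Ax + Bu)\<close>. Hence the Riccati map
  is monotone in \<open>(Q, R, P)\<close> for the Loewner order, and since the two bounds of \<open>\<P>\<close> are fixed
  points of the Riccati maps with the extreme weights, it maps \<open>\<P>\<close> into itself whenever
  \<open>Q \<in> \<Q>\<close> and \<open>R \<in> \<R>\<close>; backward induction from \<open>P\<^sub>N = Q\<^sub>N\<close> gives the claim.

  The bounds are defined by a definite description, so we also show that the DARE has exactly one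
  positive semidefinite solution, which is positive definite. Existence: value iteration from \<open>0\<close>
  increases, and is bounded by the cost of a control steering \<open>x\<close> to \<open>0\<close> in \<open>n\<close> steps, which
  exists by controllability; its limit is a fixed point because the optimal controls stay bounded.
  Uniqueness: along the closed loop of an optimal feedback for one solution the state tends to \<open>0\<close>,
  while the difference of the two quadratic forms does not decrease, so it is nonpositive.
\<close>

section \<open>Quadratic forms and the Loewner order\<close>

abbreviation quad_form :: "real^'n^'n \<Rightarrow> real^'n \<Rightarrow> real" where
  "quad_form M x \<equiv> x \<bullet> (M *v x)"

lemma transpose_add: "transpose (X + Y) = transpose X + transpose (Y :: 'a::plus^'n^'m)"
  by (simp add: transpose_def vec_eq_iff)

lemma transpose_diff: "transpose (X - Y) = transpose X - transpose (Y :: 'a::minus^'n^'m)"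
  by (simp add: transpose_def vec_eq_iff)

lemma inner_transpose_matrix_vector: "x \<bullet> (transpose M *v y) = (M *v x) \<bullet> (y :: real^'m)"
  by (metis dot_lmul_matrix inner_commute transpose_matrix_vector)

lemma inner_symmetric_matrix_vector:
  "transpose M = M \<Longrightarrow> x \<bullet> (M *v y) = y \<bullet> (M *v (x :: real^'n))"
  by (metis inner_commute inner_transpose_matrix_vector)

lemma quad_form_scaled_identity: "quad_form (c *\<^sub>R mat 1) x = c * (norm x)\<^sup>2"
  by (simp add: scaleR_matrix_vector_assoc[symmetric] power2_norm_eq_inner)

lemma quad_form_abs_le: "\<bar>quad_form M x\<bar> \<le> (\<Sum>i\<in>UNIV. \<Sum>j\<in>UNIV. \<bar>M $ i $ j\<bar>) * (norm x)\<^sup>2"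
proof -
  have "\<bar>quad_form M x\<bar> \<le> norm x * norm (M *v x)"
    by (rule Cauchy_Schwarz_ineq2)
  also have "\<dots> \<le> norm x * (onorm ((*v) M) * norm x)"
    by (intro mult_left_mono onorm[OF matrix_vector_mul_bounded_linear]) simp
  also have "\<dots> \<le> norm x * ((\<Sum>i\<in>UNIV. \<Sum>j\<in>UNIV. \<bar>M $ i $ j\<bar>) * norm x)"
    by (intro mult_left_mono mult_right_mono onorm_le_matrix_component_sum) auto
  finally show ?thesis
    by (simp add: power2_eq_square mult_ac)
qed

lemma tendsto_quad_form:
  assumes "(P \<longlongrightarrow> L) F"
  shows "((\<lambda>k. quad_form (P k) x) \<longlongrightarrow> quad_form L x) F"
  unfolding inner_vec_def matrix_vector_mult_def
  by (simp only: vec_lambda_beta) (intro tendsto_intros tendsto_vec_nth assms)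

lemma symmetric_matrix_eqI:
  fixes X Y :: "real^'n^'n"
  assumes "transpose X = X" "transpose Y = Y" "\<And>x. quad_form X x = quad_form Y x"
  shows "X = Y"
proof -
  define S where "S = X - Y"
  have sym: "transpose S = S" and zero: "quad_form S x = 0" for x
    using assms by (simp_all add: S_def transpose_diff matrix_vector_mult_diff_rdistrib inner_diff_right)
  have "x \<bullet> (S *v y) = 0" for x y
  proof -
    have "quad_form S (x + y) = quad_form S x + 2 * (x \<bullet> (S *v y)) + quad_form S y"
      using inner_symmetric_matrix_vector[OF sym, of y x]
      by (simp add: matrix_vector_right_distrib inner_add_left inner_add_right)
    then show ?thesis
      using zero by simp
  qed
  then have "S *v y = 0" for y
    by (metis inner_eq_zero_iff)
  then have "X *v y = Y *v y" for y
    by (simp add: S_def matrix_vector_mult_diff_rdistrib)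
  then show ?thesis
    by (simp add: matrix_eq)
qed

lemma psd_quad_form_nonneg: "psd M \<Longrightarrow> 0 \<le> quad_form M x"
  by (simp add: psd_def)

lemma pos_def_imp_psd: "pos_def M \<Longrightarrow> psd M"
  unfolding pos_def_def psd_def by (metis inner_zero_left order.refl less_imp_le)

lemma pos_def_scaled_identity: "0 < c \<Longrightarrow> pos_def (c *\<^sub>R mat 1)"
  by (simp add: pos_def_def transpose_scalar quad_form_scaled_identity)

lemma pos_def_coercive:
  fixes M :: "real^'n^'n"
  assumes "pos_def M"
  obtains c where "0 < c" "\<And>x. c * (norm x)\<^sup>2 \<le> quad_form M x"
proof -
  have "axis undefined 1 \<in> sphere (0 :: real^'n) 1"
    by (simp add: norm_axis_1)
  then have "sphere (0 :: real^'n) 1 \<noteq> {}"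
    by blast
  moreover have "continuous_on (sphere 0 1) (\<lambda>x :: real^'n. quad_form M x)"
    by (intro continuous_intros)
  ultimately obtain y where y: "y \<in> sphere 0 1" and min: "\<forall>z \<in> sphere 0 1. quad_form M y \<le> quad_form M z"
    using continuous_attains_inf[OF compact_sphere] by blast
  have "quad_form M y * (norm x)\<^sup>2 \<le> quad_form M x" for x
  proof (cases "x = 0")
    case False
    have "quad_form M y \<le> quad_form M (x /\<^sub>R norm x)"
      using False min by (simp del: inner_scaleR_left inner_scaleR_right)
    also have "\<dots> = quad_form M x / (norm x)\<^sup>2"
      by (simp add: matrix_vector_mult_scaleR power2_eq_square field_simps)
    finally show ?thesis
      using False by (simp add: pos_le_divide_eq)
  qed simp
  moreover have "0 < quad_form M y"
    using assms y unfolding pos_def_def by (metis mem_sphere_0 norm_zero zero_neq_one)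
  ultimately show ?thesis
    using that by (simp add: mult.commute)
qed

lemma pos_def_matrix_inv:
  fixes M :: "real^'n^'n"
  assumes "pos_def M"
  shows "M ** matrix_inv M = mat 1" "transpose (matrix_inv M) = matrix_inv M"
proof -
  have sym: "transpose M = M"
    using assms by (simp add: pos_def_def)
  have "\<forall>x. M *v x = 0 \<longrightarrow> x = 0"
    using assms unfolding pos_def_def by force
  then have "invertible M"
    by (simp add: matrix_left_invertible_ker invertible_left_inverse)
  then show right: "M ** matrix_inv M = mat 1"
    unfolding invertible_def matrix_inv_def by (rule someI2_ex) simp
  have "transpose (matrix_inv M) = transpose (matrix_inv M) ** (M ** matrix_inv M)"
    using right by simp
  also have "\<dots> = transpose (M ** matrix_inv M) ** matrix_inv M"
    by (simp add: matrix_transpose_mul sym matrix_mul_assoc)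
  also have "\<dots> = matrix_inv M"
    using right by simp
  finally show "transpose (matrix_inv M) = matrix_inv M" .
qed

lemma loewner_le_iff_quad_form:
  "loewner_le X Y \<longleftrightarrow> transpose (Y - X) = Y - X \<and> (\<forall>x. quad_form X x \<le> quad_form Y x)"
  by (simp add: loewner_le_def psd_def matrix_vector_mult_diff_rdistrib inner_diff_right)

lemma loewner_le_quad_form: "loewner_le X Y \<Longrightarrow> quad_form X x \<le> quad_form Y x"
  by (simp add: loewner_le_iff_quad_form)

lemma loewner_leI:
  "transpose X = X \<Longrightarrow> transpose Y = Y \<Longrightarrow> (\<And>x. quad_form X x \<le> quad_form Y x) \<Longrightarrow> loewner_le X Y"
  by (simp add: loewner_le_iff_quad_form transpose_diff)

lemma loewner_le_symmetric: "transpose X = X \<Longrightarrow> loewner_le X Y \<Longrightarrow> transpose Y = Y"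
  unfolding loewner_le_def psd_def by (metis diff_add_cancel transpose_add)

lemma loewner_le_psd:
  assumes "psd X" "loewner_le X Y"
  shows "psd Y"
  unfolding psd_def
proof (intro conjI allI)
  show "transpose Y = Y"
    using assms loewner_le_symmetric psd_def by blast
  show "0 \<le> quad_form Y x" for x
    using assms order_trans[OF psd_quad_form_nonneg loewner_le_quad_form] by blast
qed

lemma loewner_le_pos_def:
  assumes "pos_def X" "loewner_le X Y"
  shows "pos_def Y"
  unfolding pos_def_def
proof (intro conjI allI impI)
  show "transpose Y = Y"
    using assms loewner_le_symmetric pos_def_def by blast
  show "0 < quad_form Y x" if "x \<noteq> 0" for x
    using assms that loewner_le_quad_form[of X Y x] unfolding pos_def_def by force
qed

lemma pos_def_transpose_mult_add:
  fixes B :: "real^'m^'n"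
  assumes "psd P" "pos_def R"
  shows "pos_def (transpose B ** P ** B + R)"
  unfolding pos_def_def
proof (intro conjI allI impI)
  show "transpose (transpose B ** P ** B + R) = transpose B ** P ** B + R"
    using assms by (simp add: psd_def pos_def_def transpose_add matrix_transpose_mul matrix_mul_assoc)
  show "0 < quad_form (transpose B ** P ** B + R) u" if "u \<noteq> 0" for u
  proof -
    have "quad_form (transpose B ** P ** B + R) u = quad_form P (B *v u) + quad_form R u"
      by (simp add: matrix_vector_mult_add_rdistrib inner_add_right inner_transpose_matrix_vector
          matrix_vector_mul_assoc[symmetric] del: transpose_matrix_vector)
    moreover have "0 \<le> quad_form P (B *v u)"
      using assms(1) by (rule psd_quad_form_nonneg)
    moreover have "0 < quad_form R u"
      using assms(2) that by (simp add: pos_def_def)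
    ultimately show ?thesis
      by linarith
  qed
qed

section \<open>Column spaces and limits\<close>

lemma span_Union_columns_sum:
  fixes M :: "nat \<Rightarrow> real^'m^'n"
  assumes "y \<in> span (\<Union>k\<in>{..<n}. columns (M k))"
  shows "\<exists>w. y = (\<Sum>k<n. M k *v w k)"
proof -
  let ?P = "\<lambda>y. \<exists>w. y = (\<Sum>k<n. M k *v w k)"
  have sub: "subspace (Collect ?P)"
    unfolding subspace_def
  proof (intro conjI ballI allI)
    show "0 \<in> Collect ?P"
      by (auto intro!: exI[of _ "\<lambda>_. 0"])
  next
    fix a b assume "a \<in> Collect ?P" "b \<in> Collect ?P"
    then obtain w1 w2 where "a = (\<Sum>k<n. M k *v w1 k)" "b = (\<Sum>k<n. M k *v w2 k)"
      by auto
    then have "a + b = (\<Sum>k<n. M k *v (w1 k + w2 k))"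
      by (simp add: matrix_vector_right_distrib sum.distrib)
    then show "a + b \<in> Collect ?P"
      unfolding mem_Collect_eq by (rule exI[of _ "\<lambda>k. w1 k + w2 k"])
  next
    fix c :: real and a assume "a \<in> Collect ?P"
    then obtain w where "a = (\<Sum>k<n. M k *v w k)"
      by auto
    then have "c *\<^sub>R a = (\<Sum>k<n. M k *v (c *\<^sub>R w k))"
      by (simp add: matrix_vector_mult_scaleR scaleR_sum_right)
    then show "c *\<^sub>R a \<in> Collect ?P"
      unfolding mem_Collect_eq by (rule exI[of _ "\<lambda>k. c *\<^sub>R w k"])
  qed
  have "?P z" if z: "z \<in> (\<Union>k\<in>{..<n}. columns (M k))" for z
  proof -
    obtain k i where k: "k < n" and zk: "z = column i (M k)"
      using z unfolding columns_def by auto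
    have "(\<Sum>k'<n. M k' *v (if k' = k then axis i 1 else 0)) = (\<Sum>k'<n. if k' = k then M k *v axis i 1 else 0)"
      by (rule sum.cong) auto
    also have "\<dots> = M k *v axis i 1"
      using k by simp
    finally have "z = (\<Sum>k'<n. M k' *v (if k' = k then axis i 1 else 0))"
      using zk by (simp add: matrix_vector_mult_basis)
    then show ?thesis
      by (rule exI[of _ "\<lambda>k'. if k' = k then axis i 1 else 0"])
  qed
  then show ?thesis
    using span_induct[OF assms sub] by simp
qed

lemma symmetric_matrix_polarization:
  fixes M :: "real^'n^'n"
  assumes "transpose M = M"
  shows "M = (\<chi> i j. (quad_form M (axis i 1 + axis j 1) - quad_form M (axis i 1) - quad_form M (axis j 1)) / 2)"
proof -
  have "axis i 1 \<bullet> (M *v axis j 1) = M $ i $ j" for i j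
    by (simp add: inner_axis' matrix_vector_mult_basis column_def)
  moreover have "M $ j $ i = M $ i $ j" for i j
    using assms by (metis transpose_def vec_lambda_beta)
  ultimately show ?thesis
    by (simp add: vec_eq_iff matrix_vector_right_distrib inner_add_left inner_add_right)
qed

lemma quad_form_monotone_convergent:
  fixes P :: "nat \<Rightarrow> real^'n^'n"
  assumes "\<And>k. transpose (P k) = P k" "\<And>x. incseq (\<lambda>k. quad_form (P k) x)"
    and "\<And>x. bdd_above (range (\<lambda>k. quad_form (P k) x))"
  obtains L where "transpose L = L" "P \<longlonglongrightarrow> L"
proof -
  define q where "q x = (SUP k. quad_form (P k) x)" for x
  define L :: "real^'n^'n" where
    "L = (\<chi> i j. (q (axis i 1 + axis j 1) - q (axis i 1) - q (axis j 1)) / 2)"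
  have sym: "transpose L = L"
    unfolding L_def transpose_def by (simp add: vec_eq_iff ac_simps)
  have q: "(\<lambda>k. quad_form (P k) x) \<longlonglongrightarrow> q x" for x
    unfolding q_def using assms(3,2) by (rule LIMSEQ_incseq_SUP)
  have "P = (\<lambda>k. \<chi> i j. (quad_form (P k) (axis i 1 + axis j 1) - quad_form (P k) (axis i 1)
      - quad_form (P k) (axis j 1)) / 2)"
    by (rule ext, rule symmetric_matrix_polarization, rule assms(1))
  also have "\<dots> \<longlonglongrightarrow> L"
    unfolding L_def by (intro tendsto_intros q) simp
  finally show ?thesis
    using sym that by blast
qed

lemma descent_orbit_tendsto_zero:
  fixes g :: "'a::real_normed_vector \<Rightarrow> 'a" and V :: "'a \<Rightarrow> real"
  assumes "\<And>y. V (g y) + q * (norm y)\<^sup>2 \<le> V y" "\<And>y. 0 \<le> V y" "0 < q"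
  shows "(\<lambda>k. (g ^^ k) x) \<longlonglongrightarrow> 0"
proof -
  have "q * (\<Sum>k<n. (norm ((g ^^ k) x))\<^sup>2) + V ((g ^^ n) x) \<le> V x" for n
  proof (induction n)
    case (Suc n)
    then show ?case
      using assms(1)[of "(g ^^ n) x"] by (simp add: distrib_left)
  qed simp
  then have "(\<Sum>k<n. (norm ((g ^^ k) x))\<^sup>2) \<le> V x / q" for n
    using assms(2,3) by (smt (verit) pos_le_divide_eq mult.commute)
  then have "summable (\<lambda>k. (norm ((g ^^ k) x))\<^sup>2)"
    by (intro summableI_nonneg_bounded) auto
  then have "(\<lambda>k. sqrt ((norm ((g ^^ k) x))\<^sup>2)) \<longlonglongrightarrow> sqrt 0"
    by (intro tendsto_real_sqrt summable_LIMSEQ_zero)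
  then show ?thesis
    by (simp add: tendsto_norm_zero_iff)
qed

section \<open>The Riccati operator\<close>

context
  fixes A :: "real^'n^'n" and B :: "real^'m^'n"
begin

definition bellman_cost :: "real^'n^'n \<Rightarrow> real^'m^'m \<Rightarrow> real^'n^'n \<Rightarrow> real^'n \<Rightarrow> real^'m \<Rightarrow> real" where
  "bellman_cost Q R P x u = quad_form Q x + quad_form R u + quad_form P (A *v x + B *v u)"

lemma bellman_cost_completion_of_squares:
  assumes "psd P" "pos_def R"
  defines "H \<equiv> transpose B ** P ** B + R"
    and "K \<equiv> matrix_inv (transpose B ** P ** B + R) ** transpose B ** P ** A"
  shows "bellman_cost Q R P x u = quad_form (riccati A B Q R P) x + quad_form H (u + K *v x)"
proof -
  have sP: "transpose P = P"
    using assms(1) by (simp add: psd_def)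
  have H: "pos_def H"
    unfolding H_def using assms(1,2) by (rule pos_def_transpose_mult_add)
  then have sH: "transpose H = H"
    by (simp add: pos_def_def)
  define v where "v = A *v x"
  define z where "z = transpose B *v (P *v v)"
  define w where "w = K *v x"
  have w: "w = matrix_inv H *v z"
    by (simp add: w_def K_def H_def z_def v_def matrix_vector_mul_assoc matrix_mul_assoc)
  have Hw: "H *v w = z"
    by (simp add: w matrix_vector_mul_assoc pos_def_matrix_inv(1)[OF H])
  have ric: "quad_form (riccati A B Q R P) x = quad_form Q x + quad_form P v - z \<bullet> w"
  proof -
    have "quad_form (riccati A B Q R P) x
        = quad_form Q x + x \<bullet> (transpose A *v ((P - P ** B ** matrix_inv H ** transpose B ** P) *v v))"
      by (simp add: riccati_def H_def v_def matrix_vector_mult_add_rdistrib inner_add_right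
          matrix_vector_mul_assoc[symmetric])
    also have "x \<bullet> (transpose A *v ((P - P ** B ** matrix_inv H ** transpose B ** P) *v v))
        = quad_form P v - v \<bullet> ((P ** B ** matrix_inv H ** transpose B ** P) *v v)"
      by (simp add: inner_transpose_matrix_vector v_def[symmetric] matrix_vector_mult_diff_rdistrib
          inner_diff_right del: transpose_matrix_vector)
    also have "(P ** B ** matrix_inv H ** transpose B ** P) *v v = P *v (B *v w)"
      by (simp add: w z_def matrix_vector_mul_assoc matrix_mul_assoc)
    also have "v \<bullet> (P *v (B *v w)) = z \<bullet> w"
      by (simp add: z_def inner_commute inner_transpose_matrix_vector inner_symmetric_matrix_vector[OF sP]
          del: transpose_matrix_vector)
    finally show ?thesis
      by simp
  qed
  have "quad_form H (u + w) = quad_form R u + quad_form P (B *v u) + 2 * (u \<bullet> z) + z \<bullet> w"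
  proof -
    have "quad_form H u = quad_form R u + quad_form P (B *v u)"
      by (simp add: H_def matrix_vector_mult_add_rdistrib inner_add_right inner_transpose_matrix_vector
          matrix_vector_mul_assoc[symmetric] del: transpose_matrix_vector)
    moreover have "w \<bullet> (H *v u) = u \<bullet> z"
      using inner_symmetric_matrix_vector[OF sH, of w u] Hw by simp
    ultimately show ?thesis
      using Hw by (simp add: matrix_vector_right_distrib inner_add_left inner_add_right inner_commute)
  qed
  moreover have "quad_form P (v + B *v u) = quad_form P v + 2 * (u \<bullet> z) + quad_form P (B *v u)"
  proof -
    have "(B *v u) \<bullet> (P *v v) = u \<bullet> z"
      unfolding z_def by (rule inner_transpose_matrix_vector[symmetric])
    moreover have "v \<bullet> (P *v (B *v u)) = u \<bullet> z"
      using inner_symmetric_matrix_vector[OF sP, of v "B *v u"] calculation by simp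
    ultimately show ?thesis
      by (simp add: matrix_vector_right_distrib inner_add_left inner_add_right)
  qed
  ultimately show ?thesis
    using ric by (simp add: bellman_cost_def v_def w_def)
qed

lemma riccati_le_bellman_cost:
  assumes "psd P" "pos_def R"
  shows "quad_form (riccati A B Q R P) x \<le> bellman_cost Q R P x u"
  using bellman_cost_completion_of_squares[OF assms]
    psd_quad_form_nonneg[OF pos_def_imp_psd[OF pos_def_transpose_mult_add[OF assms]]]
  by (metis le_add_same_cancel1)

lemma riccati_eq_bellman_cost:
  assumes "psd P" "pos_def R"
  obtains u where "bellman_cost Q R P x u = quad_form (riccati A B Q R P) x"
proof
  let ?K = "matrix_inv (transpose B ** P ** B + R) ** transpose B ** P ** A"
  show "bellman_cost Q R P x (- (?K *v x)) = quad_form (riccati A B Q R P) x"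
    using bellman_cost_completion_of_squares[OF assms, of Q x "- (?K *v x)"] by simp
qed

lemma riccati_symmetric:
  assumes "transpose Q = Q" "psd P" "pos_def R"
  shows "transpose (riccati A B Q R P) = riccati A B Q R P"
  using assms pos_def_matrix_inv(2)[OF pos_def_transpose_mult_add[OF assms(2,3)]]
  by (simp add: psd_def pos_def_def riccati_def transpose_add transpose_diff matrix_transpose_mul
      matrix_mul_assoc)

lemma quad_form_le_riccati:
  assumes "psd Q" "psd P" "pos_def R"
  shows "quad_form Q x \<le> quad_form (riccati A B Q R P) x"
proof -
  obtain u where "bellman_cost Q R P x u = quad_form (riccati A B Q R P) x"
    using riccati_eq_bellman_cost[OF assms(2,3)] .
  moreover have "0 \<le> quad_form R u" "0 \<le> quad_form P (A *v x + B *v u)"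
    using assms by (simp_all add: psd_quad_form_nonneg pos_def_imp_psd)
  ultimately show ?thesis
    by (simp add: bellman_cost_def)
qed

lemma psd_riccati:
  assumes "psd Q" "psd P" "pos_def R"
  shows "psd (riccati A B Q R P)"
  unfolding psd_def
proof (intro conjI allI)
  show "transpose (riccati A B Q R P) = riccati A B Q R P"
    using assms by (simp add: riccati_symmetric psd_def)
  show "0 \<le> quad_form (riccati A B Q R P) x" for x
    using psd_quad_form_nonneg[OF assms(1)] quad_form_le_riccati[OF assms] by (rule order_trans)
qed

lemma riccati_mono_quad_form:
  assumes "psd P1" "pos_def R1" "psd P2" "pos_def R2"
    and "\<And>x. quad_form Q1 x \<le> quad_form Q2 x"
    and "\<And>u. quad_form R1 u \<le> quad_form R2 u"
    and "\<And>x. quad_form P1 x \<le> quad_form P2 x"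
  shows "quad_form (riccati A B Q1 R1 P1) x \<le> quad_form (riccati A B Q2 R2 P2) x"
proof -
  obtain u where u: "bellman_cost Q2 R2 P2 x u = quad_form (riccati A B Q2 R2 P2) x"
    using riccati_eq_bellman_cost[OF assms(3,4)] .
  have "quad_form (riccati A B Q1 R1 P1) x \<le> bellman_cost Q1 R1 P1 x u"
    using assms(1,2) by (rule riccati_le_bellman_cost)
  also have "\<dots> \<le> bellman_cost Q2 R2 P2 x u"
    unfolding bellman_cost_def using assms(5-7) by (intro add_mono)
  finally show ?thesis
    using u by simp
qed

lemma riccati_loewner_mono:
  assumes "transpose Q1 = Q1" "psd P1" "pos_def R1" "psd P2" "pos_def R2"
    and "loewner_le Q1 Q2" "loewner_le R1 R2" "loewner_le P1 P2"
  shows "loewner_le (riccati A B Q1 R1 P1) (riccati A B Q2 R2 P2)"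
proof (rule loewner_leI)
  show "transpose (riccati A B Q1 R1 P1) = riccati A B Q1 R1 P1"
    using assms(1-3) by (rule riccati_symmetric)
  show "transpose (riccati A B Q2 R2 P2) = riccati A B Q2 R2 P2"
    using assms(4,5) loewner_le_symmetric[OF assms(1,6)] by (intro riccati_symmetric)
  show "quad_form (riccati A B Q1 R1 P1) x \<le> quad_form (riccati A B Q2 R2 P2) x" for x
    using assms(2-5) by (rule riccati_mono_quad_form) (use assms(6-8) loewner_le_quad_form in blast)+
qed

section \<open>Value iteration and the solution of the DARE\<close>

lemma psd_riccati_iterate:
  assumes "psd Q" "pos_def R"
  shows "psd ((riccati A B Q R ^^ k) 0)"
proof (induction k)
  case 0
  show ?case
    by (simp add: psd_def transpose_def vec_eq_iff)
next
  case (Suc k)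
  then show ?case
    using assms by (simp add: psd_riccati)
qed

primrec trajectory :: "real^'n \<Rightarrow> (nat \<Rightarrow> real^'m) \<Rightarrow> nat \<Rightarrow> real^'n" where
  "trajectory x u 0 = x"
| "trajectory x u (Suc j) = A *v trajectory x u j + B *v u j"

lemma trajectory_Suc_shift: "trajectory x u (Suc j) = trajectory (A *v x + B *v u 0) (\<lambda>i. u (Suc i)) j"
  by (induction j) auto

lemma trajectory_eq: "trajectory x u m = matpow A m *v x + (\<Sum>j<m. (matpow A (m - Suc j) ** B) *v u j)"
proof (induction m)
  case (Suc m)
  have "A *v ((matpow A (m - Suc j) ** B) *v u j) = (matpow A (Suc m - Suc j) ** B) *v u j" if "j < m" for j
  proof -
    have "matpow A (Suc m - Suc j) = A ** matpow A (m - Suc j)"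
      using that by (metis Suc_diff_Suc diff_Suc_Suc matpow.simps(2))
    then show ?thesis
      by (simp add: matrix_vector_mul_assoc matrix_mul_assoc)
  qed
  then have "(\<Sum>j<m. A *v ((matpow A (m - Suc j) ** B) *v u j)) = (\<Sum>j<m. (matpow A (Suc m - Suc j) ** B) *v u j)"
    by (intro sum.cong) auto
  then show ?case
    using Suc by (simp add: matrix_vector_right_distrib vec.sum matrix_vector_mul_assoc)
qed simp

lemma controllable_steer_to_zero:
  assumes "controllable A B"
  obtains u where "trajectory x u CARD('n) = 0"
proof -
  let ?n = "CARD('n)"
  have "- (matpow A ?n *v x) \<in> span (\<Union>k\<in>{..<?n}. columns (matpow A k ** B))"
    using assms unfolding controllable_def by simp
  then obtain w where w: "- (matpow A ?n *v x) = (\<Sum>k<?n. (matpow A k ** B) *v w k)"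
    using span_Union_columns_sum[where M = "\<lambda>k. matpow A k ** B"] by blast
  have "(\<Sum>j<?n. (matpow A (?n - Suc j) ** B) *v w (?n - Suc j)) = (\<Sum>k<?n. (matpow A k ** B) *v w k)"
    by (rule sum.nat_diff_reindex)
  then have "trajectory x (\<lambda>j. w (?n - Suc j)) ?n = 0"
    using w by (simp add: trajectory_eq) (metis add.right_inverse)
  then show ?thesis
    by (rule that)
qed

lemma riccati_iterate_le_cost:
  assumes "psd Q" "pos_def R" "trajectory x u m = 0"
  shows "quad_form ((riccati A B Q R ^^ k) 0) x
    \<le> (\<Sum>j<m. quad_form Q (trajectory x u j) + quad_form R (u j))"
  using assms(3)
proof (induction m arbitrary: x u k)
  case (Suc m)
  show ?case
  proof (cases k)
    case 0
    then show ?thesis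
      using assms(1,2) by (auto intro!: sum_nonneg add_nonneg_nonneg psd_quad_form_nonneg pos_def_imp_psd)
  next
    case (Suc k')
    let ?y = "A *v x + B *v u 0" and ?v = "\<lambda>i. u (Suc i)"
    have "quad_form ((riccati A B Q R ^^ k) 0) x \<le> bellman_cost Q R ((riccati A B Q R ^^ k') 0) x (u 0)"
      using Suc assms by (simp add: riccati_le_bellman_cost psd_riccati_iterate)
    also have "\<dots> \<le> quad_form Q x + quad_form R (u 0)
        + (\<Sum>j<m. quad_form Q (trajectory ?y ?v j) + quad_form R (?v j))"
      unfolding bellman_cost_def using Suc.IH Suc.prems trajectory_Suc_shift by (simp add: add_mono)
    also have "\<dots> = (\<Sum>j<Suc m. quad_form Q (trajectory x u j) + quad_form R (u j))"
      by (simp add: sum.lessThan_Suc_shift trajectory_Suc_shift del: sum.lessThan_Suc trajectory.simps(2))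
    finally show ?thesis .
  qed
qed simp

lemma riccati_limit_le:
  assumes "psd Q" "pos_def R" "\<And>k. psd (P k)" "psd L"
    and "\<And>k. P (Suc k) = riccati A B Q R (P k)" "P \<longlonglongrightarrow> L"
    and "\<And>k x. quad_form (P k) x \<le> quad_form L x"
  shows "quad_form (riccati A B Q R L) x \<le> quad_form L x"
proof -
  obtain r where r: "0 < r" "\<And>v. r * (norm v)\<^sup>2 \<le> quad_form R v"
    using pos_def_coercive[OF assms(2)] by blast
  have "\<forall>k. \<exists>v. bellman_cost Q R (P k) x v = quad_form (P (Suc k)) x"
    using riccati_eq_bellman_cost[OF assms(3,2)] assms(5) by metis
  then obtain u where u: "\<And>k. bellman_cost Q R (P k) x (u k) = quad_form (P (Suc k)) x"
    by metis
  define W where "W = quad_form L x"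
  define U where "U = sqrt (W / r)"
  define Y where "Y = norm (A *v x) + onorm ((*v) B) * U"
  define S where "S k = (\<Sum>i\<in>UNIV. \<Sum>j\<in>UNIV. \<bar>(L - P k) $ i $ j\<bar>)" for k
  txt \<open>The optimal controls \<open>u k\<close> for \<open>P k\<close> are bounded, so the error \<open>L - P k\<close> along them vanishes.\<close>
  have "norm (u k) \<le> U" for k
  proof -
    have "r * (norm (u k))\<^sup>2 \<le> bellman_cost Q R (P k) x (u k)"
      using r(2)[of "u k"] psd_quad_form_nonneg[OF assms(1), of x] psd_quad_form_nonneg[OF assms(3)]
      unfolding bellman_cost_def by (smt (verit))
    also have "\<dots> \<le> W"
      using u assms(7) by (simp add: W_def)
    finally show ?thesis
      using r(1) by (simp add: U_def real_le_rsqrt pos_le_divide_eq mult.commute)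
  qed
  have y: "norm (A *v x + B *v u k) \<le> Y" for k
  proof -
    have "norm (B *v u k) \<le> onorm ((*v) B) * norm (u k)"
      by (rule onorm[OF matrix_vector_mul_bounded_linear])
    then have "norm (A *v x + B *v u k) \<le> norm (A *v x) + onorm ((*v) B) * norm (u k)"
      using norm_triangle_ineq[of "A *v x" "B *v u k"] by linarith
    also have "\<dots> \<le> Y"
      unfolding Y_def using \<open>norm (u k) \<le> U\<close>
      by (intro add_left_mono mult_left_mono onorm_pos_le matrix_vector_mul_bounded_linear)
    finally show ?thesis .
  qed
  have "quad_form (riccati A B Q R L) x \<le> W + S k * Y\<^sup>2" for k
  proof -
    let ?y = "A *v x + B *v u k"
    have "quad_form (riccati A B Q R L) x \<le> bellman_cost Q R L x (u k)"
      using assms(4,2) by (rule riccati_le_bellman_cost)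
    also have "\<dots> = bellman_cost Q R (P k) x (u k) + quad_form (L - P k) ?y"
      by (simp add: bellman_cost_def matrix_vector_mult_diff_rdistrib inner_diff_right)
    also have "\<dots> \<le> W + S k * (norm ?y)\<^sup>2"
      using u[of k] assms(7)[where k = "Suc k" and x = x] quad_form_abs_le[where M = "L - P k" and x = ?y]
      unfolding W_def S_def by linarith
    also have "\<dots> \<le> W + S k * Y\<^sup>2"
      using y[of k] by (intro add_left_mono mult_left_mono power_mono) (auto simp: S_def intro!: sum_nonneg)
    finally show ?thesis .
  qed
  moreover have "S \<longlonglongrightarrow> (\<Sum>i\<in>UNIV. \<Sum>j\<in>UNIV. \<bar>(L - L) $ i $ j\<bar>)"
    unfolding S_def by (intro tendsto_intros tendsto_vec_nth assms(6))
  then have "(\<lambda>k. W + S k * Y\<^sup>2) \<longlonglongrightarrow> W + 0 * Y\<^sup>2"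
    by (intro tendsto_intros) simp
  ultimately show ?thesis
    unfolding W_def by (intro LIMSEQ_le_const) auto
qed

lemma riccati_limit_fixpoint:
  assumes "psd Q" "pos_def R" "\<And>k. psd (P k)"
    and "\<And>k. P (Suc k) = riccati A B Q R (P k)" "\<And>x. incseq (\<lambda>k. quad_form (P k) x)"
    and "P \<longlonglongrightarrow> L" "transpose L = L"
  shows "riccati A B Q R L = L"
proof (rule symmetric_matrix_eqI)
  have le_L: "quad_form (P k) x \<le> quad_form L x" for k x
    using assms(5) tendsto_quad_form[OF assms(6)] by (rule incseq_le)
  have L: "psd L"
    unfolding psd_def using assms(7) le_L psd_quad_form_nonneg[OF assms(3)] order_trans by blast
  show "transpose (riccati A B Q R L) = riccati A B Q R L"
    using assms(1,2) L by (simp add: riccati_symmetric psd_def)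
  show "transpose L = L"
    by (rule assms(7))
  show "quad_form (riccati A B Q R L) x = quad_form L x" for x
  proof (rule antisym)
    show "quad_form (riccati A B Q R L) x \<le> quad_form L x"
      using assms(1-3) L assms(4,6) le_L by (rule riccati_limit_le)
    have "quad_form (P (Suc k)) x \<le> quad_form (riccati A B Q R L) x" for k
      unfolding assms(4) by (rule riccati_mono_quad_form[OF assms(3,2) L assms(2)]) (simp_all add: le_L)
    then show "quad_form L x \<le> quad_form (riccati A B Q R L) x"
      by (intro LIMSEQ_le_const2[OF LIMSEQ_Suc[OF tendsto_quad_form[OF assms(6)]]]) auto
  qed
qed

lemma riccati_fixpoint_exists:
  assumes "controllable A B" "pos_def Q" "pos_def R"
  obtains L where "pos_def L" "riccati A B Q R L = L"
proof -
  define P where "P k = (riccati A B Q R ^^ k) 0" for k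
  have Q: "psd Q"
    using assms(2) by (rule pos_def_imp_psd)
  have psd: "psd (P k)" for k
    unfolding P_def using Q assms(3) by (rule psd_riccati_iterate)
  have step: "P (Suc k) = riccati A B Q R (P k)" for k
    by (simp add: P_def)
  have "quad_form (P k) x \<le> quad_form (P (Suc k)) x" for k x
  proof (induction k arbitrary: x)
    case 0
    show ?case
      using psd_quad_form_nonneg[OF psd[of 1]] by (simp add: P_def)
  next
    case (Suc k)
    have "quad_form (riccati A B Q R (P k)) x \<le> quad_form (riccati A B Q R (P (Suc k))) x"
      by (rule riccati_mono_quad_form[OF psd assms(3) psd assms(3)]) (simp_all add: Suc.IH)
    then show ?case
      by (simp only: step)
  qed
  then have inc: "incseq (\<lambda>k. quad_form (P k) x)" for x
    by (simp add: incseq_SucI)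
  have "bdd_above (range (\<lambda>k. quad_form (P k) x))" for x
  proof -
    obtain u where "trajectory x u CARD('n) = 0"
      using controllable_steer_to_zero[OF assms(1)] .
    then show ?thesis
      unfolding P_def using riccati_iterate_le_cost[OF Q assms(3)] by (intro bdd_aboveI2) blast
  qed
  then obtain L where L: "transpose L = L" "P \<longlonglongrightarrow> L"
    using quad_form_monotone_convergent[OF _ inc] psd by (metis psd_def)
  have "pos_def L"
    unfolding pos_def_def
  proof (intro conjI allI impI)
    show "0 < quad_form L x" if "x \<noteq> 0" for x
    proof -
      have "0 < quad_form Q x"
        using assms(2) that by (simp add: pos_def_def)
      also have "\<dots> \<le> quad_form (P 1) x"
        using quad_form_le_riccati[OF Q psd assms(3)] step[of 0] by simp
      also have "\<dots> \<le> quad_form L x"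
        using inc tendsto_quad_form[OF L(2)] by (rule incseq_le)
      finally show ?thesis .
    qed
  qed (rule L(1))
  moreover have "riccati A B Q R L = L"
    using Q assms(3) psd step inc L(2,1) by (rule riccati_limit_fixpoint)
  ultimately show ?thesis
    by (rule that)
qed

lemma riccati_fixpoint_quad_form_le:
  assumes "pos_def Q" "pos_def R" "psd P1" "psd P2"
    and "riccati A B Q R P1 = P1" "riccati A B Q R P2 = P2"
  shows "quad_form P1 x \<le> quad_form P2 x"
proof -
  obtain q where q: "0 < q" "\<And>y. q * (norm y)\<^sup>2 \<le> quad_form Q y"
    using pos_def_coercive[OF assms(1)] by blast
  have "\<forall>y. \<exists>v. bellman_cost Q R P2 y v = quad_form P2 y"
    using riccati_eq_bellman_cost[OF assms(4,2)] assms(6) by metis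
  then obtain u where u: "\<And>y. bellman_cost Q R P2 y (u y) = quad_form P2 y"
    by metis
  define g where "g y = A *v y + B *v u y" for y
  txt \<open>\<open>quad_form P2\<close> is a Lyapunov function for the closed loop \<open>g\<close> of the optimal feedback \<open>u\<close>.\<close>
  have "quad_form P2 (g y) + q * (norm y)\<^sup>2 \<le> quad_form P2 y" for y
    using u[of y] q(2)[of y] psd_quad_form_nonneg[OF pos_def_imp_psd[OF assms(2)], of "u y"]
    unfolding bellman_cost_def g_def by linarith
  then have "(\<lambda>k. (g ^^ k) x) \<longlonglongrightarrow> 0"
    using psd_quad_form_nonneg[OF assms(4)] q(1) by (rule descent_orbit_tendsto_zero)
  then have "(\<lambda>k. quad_form (P1 - P2) ((g ^^ k) x)) \<longlonglongrightarrow> quad_form (P1 - P2) 0"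
    by (intro tendsto_inner bounded_linear.tendsto[OF matrix_vector_mul_bounded_linear])
  moreover have "quad_form (P1 - P2) y \<le> quad_form (P1 - P2) (g y)" for y
  proof -
    have "quad_form P1 y \<le> bellman_cost Q R P1 y (u y)"
      using riccati_le_bellman_cost[OF assms(3,2)] assms(5) by metis
    then show ?thesis
      using u[of y] by (simp add: bellman_cost_def g_def matrix_vector_mult_diff_rdistrib inner_diff_right)
  qed
  then have "quad_form (P1 - P2) x \<le> quad_form (P1 - P2) ((g ^^ k) x)" for k
    by (induction k) (auto intro: order_trans)
  ultimately have "quad_form (P1 - P2) x \<le> 0"
    by (intro LIMSEQ_le_const) auto
  then show ?thesis
    by (simp add: matrix_vector_mult_diff_rdistrib inner_diff_right)
qed

lemma riccati_fixpoint_unique: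
  assumes "pos_def Q" "pos_def R" "psd P1" "psd P2"
    and "riccati A B Q R P1 = P1" "riccati A B Q R P2 = P2"
  shows "P1 = P2"
proof (rule symmetric_matrix_eqI)
  show "transpose P1 = P1" "transpose P2 = P2"
    using assms(3,4) by (simp_all add: psd_def)
  show "quad_form P1 x = quad_form P2 x" for x
    using riccati_fixpoint_quad_form_le[OF assms] riccati_fixpoint_quad_form_le[OF assms(1,2,4,3,6,5)]
    by (rule antisym)
qed

lemma dare_sol_fixpoint:
  assumes "controllable A B" "pos_def Q" "pos_def R"
  shows "pos_def (dare_sol A B Q R)" "riccati A B Q R (dare_sol A B Q R) = dare_sol A B Q R"
proof -
  obtain P where P: "pos_def P" "riccati A B Q R P = P"
    using riccati_fixpoint_exists[OF assms] .
  have "dare_sol A B Q R = P"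
    unfolding dare_sol_def
  proof (rule the_equality)
    show "pos_def P \<and> P = riccati A B Q R P"
      using P by simp
    show "X = P" if "pos_def X \<and> X = riccati A B Q R X" for X
      using assms(2,3) pos_def_imp_psd that P by (metis riccati_fixpoint_unique)
  qed
  then show "pos_def (dare_sol A B Q R)" "riccati A B Q R (dare_sol A B Q R) = dare_sol A B Q R"
    using P by simp_all
qed

end

lemma riccati_mem_Pset:
  fixes A :: "real^'n^'n" and B :: "real^'m^'n"
  assumes "0 < muf" "0 < mug" "0 < lf" "0 < lg" "controllable A B"
    and "Q \<in> Qset muf lf" "R \<in> Rset mug lg" "P \<in> Pset A B muf lf mug lg"
  shows "riccati A B Q R P \<in> Pset A B muf lf mug lg"
proof -
  let ?Pl = "dare_sol A B (muf *\<^sub>R mat 1) (mug *\<^sub>R mat 1)"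
  let ?Pu = "dare_sol A B (lf *\<^sub>R mat 1) (lg *\<^sub>R mat 1)"
  note lower = dare_sol_fixpoint[OF assms(5) pos_def_scaled_identity[OF assms(1)] pos_def_scaled_identity[OF assms(2)]]
  note upper = dare_sol_fixpoint[OF assms(5) pos_def_scaled_identity[OF assms(3)] pos_def_scaled_identity[OF assms(4)]]
  have Q: "loewner_le (muf *\<^sub>R mat 1) Q" "loewner_le Q (lf *\<^sub>R mat 1)"
    and R: "loewner_le (mug *\<^sub>R mat 1) R" "loewner_le R (lg *\<^sub>R mat 1)"
    and P: "loewner_le ?Pl P" "loewner_le P ?Pu"
    using assms(6-8) by (auto simp: Qset_def Rset_def Pset_def)
  have Pl: "psd ?Pl" and Pu: "psd ?Pu"
    using lower(1) upper(1) by (simp_all add: pos_def_imp_psd)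
  have R_pd: "pos_def R"
    using pos_def_scaled_identity[OF assms(2)] R(1) by (rule loewner_le_pos_def)
  have P_psd: "psd P"
    using Pl P(1) by (rule loewner_le_psd)
  have Q_sym: "transpose Q = Q"
    using Q(1) by (rule loewner_le_symmetric[rotated]) (simp add: transpose_scalar)
  have "loewner_le (riccati A B (muf *\<^sub>R mat 1) (mug *\<^sub>R mat 1) ?Pl) (riccati A B Q R P)"
    by (rule riccati_loewner_mono)
      (simp_all add: transpose_scalar pos_def_scaled_identity assms(2) Pl R_pd P_psd Q R P)
  moreover have "loewner_le (riccati A B Q R P) (riccati A B (lf *\<^sub>R mat 1) (lg *\<^sub>R mat 1) ?Pu)"
    by (rule riccati_loewner_mono)
      (simp_all add: pos_def_scaled_identity assms(4) Q_sym R_pd P_psd Pu Q R P)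
  ultimately show ?thesis
    unfolding Pset_def lower(2) upper(2) by simp
qed

theorem lemma13:
  fixes A :: "real^'n^'n" and B :: "real^'m^'n"
    and muf lf mug lg :: real and N :: nat
    and Qs :: "nat \<Rightarrow> real^'n^'n" and Rs :: "nat \<Rightarrow> real^'m^'m"
    and P :: "nat \<Rightarrow> real^'n^'n"
  assumes "0 < muf" and "0 < mug" and "0 < lf" and "0 < lg"
    and "controllable A B"
    and "\<forall>t<N. Qs t \<in> Qset muf lf"
    and "\<forall>t<N. Rs t \<in> Rset mug lg"
    and "Qs N \<in> Pset A B muf lf mug lg"
    and "P N = Qs N"
    and "\<forall>t<N. P t = riccati A B (Qs t) (Rs t) (P (Suc t))"
  shows "\<forall>t\<le>N. P t \<in> Pset A B muf lf mug lg"
proof -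
  have "P t \<in> Pset A B muf lf mug lg" if "t \<le> N" for t
    using that
  proof (induction t rule: inc_induct)
    case base
    show ?case
      using assms(8,9) by simp
  next
    case (step t)
    then show ?case
      using assms(6,7,10) riccati_mem_Pset[OF assms(1-5)] by simp
  qed
  then show ?thesis
    by blast
qed

end
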